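(* Let $\tau = \{t \mid t \subseteq \Omega \}$, $\tau_{b} = \{t \mid \emptyset \neq t \subseteq \Omega, I_{\phi(t,f)} \geq b \}$, and $\phi$ a decomposable probability-of-success metric. Then for $b \geq 3$, \[ \frac{|\tau_{b}|}{|\tau|} \leq 2^{-b}. \]
   Context: Algorithmic search framework: finite discrete search space $\Omega$, target set $t\subseteq\Omega$ with indicator vector $\mathbf{t}$, fixed information resource $f$, and a search algorithm $\mathcal{A}$. A probability-of-success metric $\phi$ is decomposable if there exists a probability vector $\mathbf{P}_{\phi,f}$ over $\Omega$, not a function of $t$, with $\phi(t,f)=\mathbf{t}^{\top}\mathbf{P}_{\phi,f}=P_\phi(X\in t\mid f)$. The active information of expectations is $I_{\phi(t,f)} := -\log_2\frac{p}{\phi(t,f)}$, where $p=|t|/|\Omega|$ is the per-query success probability of uniform random sampling with replacement. *)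

theory Defs
  imports Complex_Main
begin

definition prob_vector :: "'a set \<Rightarrow> ('a \<Rightarrow> real) \<Rightarrow> bool" where
  "prob_vector \<Omega> P \<longleftrightarrow> (\<forall>x\<in>\<Omega>. P x \<ge> 0) \<and> (\<Sum>x\<in>\<Omega>. P x) = 1"

definition decomposable :: "'a set \<Rightarrow> ('a set \<Rightarrow> 'f \<Rightarrow> real) \<Rightarrow> 'f \<Rightarrow> bool" where
  "decomposable \<Omega> \<phi> f \<longleftrightarrow>
     (\<exists>P. prob_vector \<Omega> P \<and> (\<forall>t. t \<subseteq> \<Omega> \<longrightarrow> \<phi> t f = (\<Sum>x\<in>t. P x)))"

definition unif_p :: "'a set \<Rightarrow> 'a set \<Rightarrow> real" where
  "unif_p \<Omega> t = real (card t) / real (card \<Omega>)"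

definition active_info :: "'a set \<Rightarrow> ('a set \<Rightarrow> 'f \<Rightarrow> real) \<Rightarrow> 'f \<Rightarrow> 'a set \<Rightarrow> real" where
  "active_info \<Omega> \<phi> f t = - log 2 (unif_p \<Omega> t / \<phi> t f)"

text \<open>tau_b. The condition phi(t,f) > 0 makes explicit that for phi(t,f) = 0 the active
  information is -infinity, hence never >= b.\<close>
definition tau_b :: "'a set \<Rightarrow> ('a set \<Rightarrow> 'f \<Rightarrow> real) \<Rightarrow> 'f \<Rightarrow> real \<Rightarrow> 'a set set" where
  "tau_b \<Omega> \<phi> f b = {t. t \<noteq> {} \<and> t \<subseteq> \<Omega> \<and> \<phi> t f > 0 \<and> active_info \<Omega> \<phi> f t \<ge> b}"

end

theory Submission
  imports Defs "HOL-Combinatorics.Transposition"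
begin

text \<open>Write \<open>N = |\<Omega>|\<close> and \<open>P(t) = \<phi>(t,f)\<close>. A target \<open>t\<close> lies in \<open>\<tau>\<^sub>b\<close> iff
  \<open>2\<^sup>b |t| \<le> N P(t)\<close>, so counting by a Markov-type bound gives
  \<open>|\<tau>\<^sub>b| \<le> 2\<^sup>-\<^sup>b N \<Sum> P(t)/|t|\<close>, summed over all nonempty \<open>t \<subseteq> \<Omega>\<close>.
  Exchanging the sums, each point \<open>x\<close> carries the weight \<open>\<Sum> 1/|t|\<close> over the sets \<open>t \<ni> x\<close>,
  which by symmetry does not depend on \<open>x\<close> and hence equals \<open>(2\<^sup>N - 1)/N\<close>.\<close>

lemma sum_card_subsets_containing_eq:
  assumes "x \<in> \<Omega>" "y \<in> \<Omega>"
  shows "(\<Sum>t\<in>{t. t \<subseteq> \<Omega> \<and> x \<in> t}. g (card t)) = (\<Sum>t\<in>{t. t \<subseteq> \<Omega> \<and> y \<in> t}. g (card t))"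
proof -
  let ?\<sigma> = "image (transpose x y)"
  have maps_into: "image (transpose a b) ` {t. t \<subseteq> \<Omega> \<and> a \<in> t} \<subseteq> {t. t \<subseteq> \<Omega> \<and> b \<in> t}"
    if "a \<in> \<Omega>" "b \<in> \<Omega>" for a b
  proof -
    have "transpose a b ` t \<subseteq> \<Omega>" if "t \<subseteq> \<Omega>" for t
      using image_mono[OF that, of "transpose a b"] \<open>a \<in> \<Omega>\<close> \<open>b \<in> \<Omega>\<close> by simp
    then show ?thesis
      by (auto intro: image_eqI[of b _ a])
  qed
  have "bij_betw ?\<sigma> {t. t \<subseteq> \<Omega> \<and> x \<in> t} {t. t \<subseteq> \<Omega> \<and> y \<in> t}"
    by (rule bij_betw_byWitness[where f' = ?\<sigma>])
      (use maps_into[OF assms] maps_into[OF assms(2,1)] in \<open>auto simp: image_image transpose_commute\<close>)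
  then have "(\<Sum>t\<in>{t. t \<subseteq> \<Omega> \<and> y \<in> t}. g (card t)) = (\<Sum>t\<in>{t. t \<subseteq> \<Omega> \<and> x \<in> t}. g (card (?\<sigma> t)))"
    by (rule sum.reindex_bij_betw[symmetric])
  also have "\<dots> = (\<Sum>t\<in>{t. t \<subseteq> \<Omega> \<and> x \<in> t}. g (card t))"
    by (simp add: card_image inj_on_subset[OF inj_transpose])
  finally show ?thesis ..
qed

lemma sum_inverse_card_subsets_containing:
  assumes "finite \<Omega>" "x \<in> \<Omega>"
  shows "(\<Sum>t\<in>{t. t \<subseteq> \<Omega> \<and> x \<in> t}. 1 / real (card t)) = (2 ^ card \<Omega> - 1) / real (card \<Omega>)"
proof -
  let ?c = "\<lambda>y. \<Sum>t\<in>{t. t \<subseteq> \<Omega> \<and> y \<in> t}. 1 / real (card t)"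
  have "real (card \<Omega>) * ?c x = (\<Sum>y\<in>\<Omega>. ?c y)"
    using sum_card_subsets_containing_eq[OF _ assms(2), of _ "\<lambda>k. 1 / real k"] by simp
  also have "\<dots> = (\<Sum>t\<in>Pow \<Omega>. \<Sum>y\<in>{y\<in>\<Omega>. y \<in> t}. 1 / real (card t))"
    using sum.swap_restrict[of "Pow \<Omega>" \<Omega> "\<lambda>t y. 1 / real (card t)" "\<lambda>t y. y \<in> t"] assms(1)
    by simp
  also have "\<dots> = (\<Sum>t\<in>Pow \<Omega>. if t = {} then 0 else 1)"
  proof (rule sum.cong[OF refl])
    fix t assume "t \<in> Pow \<Omega>"
    then have "{y\<in>\<Omega>. y \<in> t} = t" "finite t"
      using assms(1) finite_subset by auto
    then show "(\<Sum>y\<in>{y\<in>\<Omega>. y \<in> t}. 1 / real (card t)) = (if t = {} then 0 else 1)"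
      by simp
  qed
  also have "\<dots> = real (card (Pow \<Omega> - {{}}))"
    using assms(1) by (simp add: sum.remove[of "Pow \<Omega>" "{}"])
  also have "\<dots> = 2 ^ card \<Omega> - 1"
    using assms(1) by (simp add: card_Pow of_nat_diff)
  finally have "real (card \<Omega>) * ?c x = 2 ^ card \<Omega> - 1" .
  moreover have "card \<Omega> > 0"
    using assms card_gt_0_iff by blast
  ultimately show ?thesis
    by (simp add: field_simps)
qed

text \<open>The term of \<open>t = {}\<close> is \<open>0 / 0 = 0\<close>, so summing over all of \<open>Pow \<Omega>\<close> is harmless.\<close>

lemma sum_subsets_sum_div_card:
  assumes "finite \<Omega>"
  shows "(\<Sum>t\<in>Pow \<Omega>. sum P t / real (card t)) = sum P \<Omega> * (2 ^ card \<Omega> - 1) / real (card \<Omega>)"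
proof -
  have "(\<Sum>t\<in>Pow \<Omega>. sum P t / real (card t))
      = (\<Sum>t\<in>Pow \<Omega>. \<Sum>x\<in>{x\<in>\<Omega>. x \<in> t}. P x / real (card t))"
    by (intro sum.cong) (auto simp: sum_divide_distrib Int_absorb1 Collect_conj_eq[symmetric] intro: sum.cong)
  also have "\<dots> = (\<Sum>x\<in>\<Omega>. P x * (\<Sum>t\<in>{t. t \<subseteq> \<Omega> \<and> x \<in> t}. 1 / real (card t)))"
    using assms by (simp add: sum.swap_restrict sum_distrib_left)
  also have "\<dots> = (\<Sum>x\<in>\<Omega>. P x * ((2 ^ card \<Omega> - 1) / real (card \<Omega>)))"
    using assms by (intro sum.cong) (simp_all add: sum_inverse_card_subsets_containing)
  finally show ?thesis
    by (simp add: sum_distrib_right sum_divide_distrib)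
qed

lemma active_info_ge_iff:
  assumes "finite \<Omega>" "t \<noteq> {}" "t \<subseteq> \<Omega>" "\<phi> t f > 0"
  shows "b \<le> active_info \<Omega> \<phi> f t \<longleftrightarrow> 2 powr b * real (card t) \<le> real (card \<Omega>) * \<phi> t f"
proof -
  have card_pos: "real (card t) > 0" "real (card \<Omega>) > 0"
    using assms finite_subset card_gt_0_iff by (metis of_nat_0_less_iff subset_empty)+
  then have ratio_pos: "\<phi> t f / unif_p \<Omega> t > 0"
    using assms(4) by (simp add: unif_p_def)
  have "active_info \<Omega> \<phi> f t = log 2 (\<phi> t f / unif_p \<Omega> t)"
    using ratio_pos by (simp add: active_info_def log_divide)
  then have "b \<le> active_info \<Omega> \<phi> f t \<longleftrightarrow> 2 powr b \<le> \<phi> t f / unif_p \<Omega> t"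
    using ratio_pos by (simp add: le_log_iff)
  also have "\<dots> \<longleftrightarrow> 2 powr b * real (card t) \<le> real (card \<Omega>) * \<phi> t f"
    using card_pos by (simp add: unif_p_def field_simps)
  finally show ?thesis .
qed

theorem theorem2:
  fixes \<Omega> :: "'a set" and \<phi> :: "'a set \<Rightarrow> 'f \<Rightarrow> real" and f :: 'f and b :: real
  assumes "finite \<Omega>" and "\<Omega> \<noteq> {}"
    and "decomposable \<Omega> \<phi> f"
    and "b \<ge> 3"
  shows "real (card (tau_b \<Omega> \<phi> f b)) / real (card (Pow \<Omega>)) \<le> 2 powr (- b)"
proof -
  obtain P where P_nonneg: "\<forall>x\<in>\<Omega>. P x \<ge> 0" and P_sum: "sum P \<Omega> = 1"
    and \<phi>_eq: "\<And>t. t \<subseteq> \<Omega> \<Longrightarrow> \<phi> t f = sum P t"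
    using assms(3) unfolding decomposable_def prob_vector_def by blast
  define h where "h t = 2 powr (- b) * real (card \<Omega>) * (sum P t / real (card t))" for t
  have h_nonneg: "h t \<ge> 0" if "t \<in> Pow \<Omega>" for t
  proof -
    have "sum P t \<ge> 0"
      using that P_nonneg by (intro sum_nonneg) auto
    then show ?thesis
      by (simp add: h_def)
  qed
  have h_ge_1: "h t \<ge> 1" if "t \<in> tau_b \<Omega> \<phi> f b" for t
  proof -
    from that have t: "t \<noteq> {}" "t \<subseteq> \<Omega>" "\<phi> t f > 0" "b \<le> active_info \<Omega> \<phi> f t"
      by (auto simp: tau_b_def)
    have "2 powr b * real (card t) \<le> real (card \<Omega>) * sum P t"
      using active_info_ge_iff[of \<Omega> t \<phi> f b] assms(1) t \<phi>_eq[OF t(2)] by simp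
    moreover have "real (card t) > 0"
      using t assms(1) finite_subset card_gt_0_iff by (metis of_nat_0_less_iff)
    ultimately show ?thesis
      by (simp add: h_def powr_minus field_simps)
  qed
  have "real (card (tau_b \<Omega> \<phi> f b)) \<le> (\<Sum>t\<in>tau_b \<Omega> \<phi> f b. h t)"
    using sum_mono[of _ "\<lambda>_. 1" h] h_ge_1 by fastforce
  also have "\<dots> \<le> (\<Sum>t\<in>Pow \<Omega>. h t)"
    using assms(1) h_nonneg by (intro sum_mono2) (auto simp: tau_b_def)
  also have "\<dots> = 2 powr (- b) * real (card \<Omega>) * (\<Sum>t\<in>Pow \<Omega>. sum P t / real (card t))"
    unfolding h_def sum_distrib_left ..
  also have "\<dots> = 2 powr (- b) * (2 ^ card \<Omega> - 1)"
    using assms(1,2) P_sum by (simp add: sum_subsets_sum_div_card)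
  also have "\<dots> \<le> 2 powr (- b) * real (card (Pow \<Omega>))"
    using assms(1) by (simp add: card_Pow)
  finally show ?thesis
    using assms(1) by (simp add: card_Pow divide_le_eq)
qed

end
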